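(* Let $t\ge2$, $r,s,k$ be positive integers and let $A$ be an $r\times s$ zero-one matrix that is $t\times t$-partite. There exists a constant $C=C(t,r,s,k)$ such that the following holds. Let $n$ be a positive integer with $k\mid n$ and let $M$ be an $n\times n$ zero-one matrix which does not contain $A$. Partition $M$ into its $k^2$ blocks. Let $N$ be the number of copies of $K_{t,t}$ in $M$ and suppose $N>Cn^{t}$. Then one of the $k^{2}$ blocks of $M$ contains at least $\frac{(t!)^{2}}{16(rs)^{t-1}t^{2t}}\cdot\frac{N}{k^{2}}$ copies of $K_{t,t}$.
   Context: A zero-one matrix $M$ contains $A$ if one can delete some rows and columns of $M$ and turn some $1$-entries into $0$-entries so that the result is $A$. A matrix is column-$t$-partite (resp. row-$t$-partite) if its columns (resp. rows) can be cut into $t$ consecutive intervals, giving $t$ submatrices, such that every row (resp. column) of each submatrix contains at most one $1$-entry; it is $t\times t$-partite if it is both. A copy of $K_{t,t}$ in $M$ is a submatrix induced by $t$ distinct rows and $t$ distinct columns with all entries $1$. For an $n\times n$ matrix with $k\mid n$, the horizontal blocks are the submatrices formed by rows $\frac{(p-1)n}{k}+1,\dots,\frac{pn}{k}$, the vertical blocks are the submatrices formed by columns $\frac{(p-1)n}{k}+1,\dots,\frac{pn}{k}$ ($1\le p\le k$), and a block is the intersection of a horizontal and a vertical block; the $k^2$ blocks partition $M$ into $\frac nk\times\frac nk$ submatrices. *)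

theory Defs
  imports Complex_Main
begin

text \<open>A zero-one matrix with m rows and n columns is represented by a function
  nat => nat => bool (True = 1-entry), indices 0..<m and 0..<n; entries outside
  the index ranges are irrelevant.\<close>

definition contains :: "nat \<Rightarrow> nat \<Rightarrow> (nat \<Rightarrow> nat \<Rightarrow> bool) \<Rightarrow>
    nat \<Rightarrow> nat \<Rightarrow> (nat \<Rightarrow> nat \<Rightarrow> bool) \<Rightarrow> bool" where
  "contains m n M r s A \<longleftrightarrow>
     (\<exists>f g. strict_mono_on {..<r} f \<and> f ` {..<r} \<subseteq> {..<m} \<and>
            strict_mono_on {..<s} g \<and> g ` {..<s} \<subseteq> {..<n} \<and>
            (\<forall>i<r. \<forall>j<s. A i j \<longrightarrow> M (f i) (g j)))"

definition column_partite :: "nat \<Rightarrow> nat \<Rightarrow> nat \<Rightarrow> (nat \<Rightarrow> nat \<Rightarrow> bool) \<Rightarrow> bool" where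
  "column_partite t r s A \<longleftrightarrow>
     (\<exists>c::nat \<Rightarrow> nat. c 0 = 0 \<and> c t = s \<and> (\<forall>l<t. c l < c (Suc l)) \<and>
        (\<forall>l<t. \<forall>i<r. card {j. c l \<le> j \<and> j < c (Suc l) \<and> A i j} \<le> 1))"

definition row_partite :: "nat \<Rightarrow> nat \<Rightarrow> nat \<Rightarrow> (nat \<Rightarrow> nat \<Rightarrow> bool) \<Rightarrow> bool" where
  "row_partite t r s A \<longleftrightarrow>
     (\<exists>c::nat \<Rightarrow> nat. c 0 = 0 \<and> c t = r \<and> (\<forall>l<t. c l < c (Suc l)) \<and>
        (\<forall>l<t. \<forall>j<s. card {i. c l \<le> i \<and> i < c (Suc l) \<and> A i j} \<le> 1))"

definition tt_partite :: "nat \<Rightarrow> nat \<Rightarrow> nat \<Rightarrow> (nat \<Rightarrow> nat \<Rightarrow> bool) \<Rightarrow> bool" where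
  "tt_partite t r s A \<longleftrightarrow> column_partite t r s A \<and> row_partite t r s A"

definition Ktt_count :: "nat \<Rightarrow> (nat \<Rightarrow> nat \<Rightarrow> bool) \<Rightarrow> nat set \<Rightarrow> nat set \<Rightarrow> nat" where
  "Ktt_count t M Rs Cs = card {(R, C). R \<subseteq> Rs \<and> card R = t \<and> C \<subseteq> Cs \<and> card C = t \<and>
                                   (\<forall>i\<in>R. \<forall>j\<in>C. M i j)}"

definition block_idx :: "nat \<Rightarrow> nat \<Rightarrow> nat \<Rightarrow> nat set" where
  "block_idx n k p = {p * (n div k) ..< (Suc p) * (n div k)}"

end

theory Submission
  imports Defs "HOL-Library.Ramsey" "HOL-Analysis.Convex"
begin

text \<open>
  Call a \<open>t\<close>-set \<open>R\<close> of rows spread if the common neighbourhood of \<open>R\<close> meets at least \<open>s\<close>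
  vertical blocks. Among the \<open>t\<close>-subsets of a large row set at most half are spread: otherwise a
  \<open>2\<^sup>-\<^sup>k\<close>-fraction of them would meet the same set \<open>S\<close> of blocks, and by Erdos' supersaturation
  argument they would contain an ordered blow-up: \<open>t\<close> consecutive groups of \<open>r\<close> rows all
  of whose transversals are spread with block set \<open>S\<close>. Since \<open>A\<close> is row-\<open>t\<close>-partite, its rows
  can be placed in the groups so that the \<open>1\<close>s of each column of \<open>A\<close> lie on one transversal,
  and the columns of \<open>A\<close> can then be sent to \<open>s\<close> distinct blocks of \<open>S\<close>: a copy of \<open>A\<close>.

  Double counting over column \<open>t\<close>-sets shows that spread \<open>t\<close>-sets carry at most \<open>N/2 + O(n\<^sup>t)\<close>
  copies of \<open>K\<^sub>t\<^sub>,\<^sub>t\<close>, while for a non-spread \<open>t\<close>-set convexity of \<open>x \<mapsto> x\<^sup>t\<close> puts a fraction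
  \<open>t!/(t\<^sup>t s\<^sup>t\<^sup>-\<^sup>1)\<close> of its copies inside single blocks. So some vertical block carries a
  \<open>t!/(4 s\<^sup>t\<^sup>-\<^sup>1 t\<^sup>t k)\<close> fraction of all copies, and the same argument applied to the transpose of
  that block yields the required block.
\<close>

section \<open>Averaging and binomial estimates\<close>

lemma obtain_ge_average:
  fixes f :: "'a \<Rightarrow> real"
  assumes "finite A" "A \<noteq> {}" "c * real (card A) \<le> sum f A"
  obtains x where "x \<in> A" "c \<le> f x"
proof (rule ccontr)
  assume "\<not> thesis"
  with that have "\<And>x. x \<in> A \<Longrightarrow> f x < c" by force
  then have "sum f A < real (card A) * c"
    using assms(1,2) by (intro sum_bounded_above_strict) auto
  with assms(3) show False by (simp add: mult.commute)
qed

lemma obtain_strict_mono_enumeration: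
  fixes S :: "'a::linorder set"
  assumes "finite S" "s \<le> card S"
  obtains \<sigma> where "strict_mono_on {..<s} \<sigma>" "\<sigma> ` {..<s} \<subseteq> S"
proof
  let ?xs = "sorted_list_of_set S"
  show "strict_mono_on {..<s} ((!) ?xs)"
    using assms sorted_wrt_nth_less[OF strict_sorted_list_of_set[of S]]
    by (auto intro!: strict_mono_onI)
  have "set ?xs = S" "length ?xs = card S" using assms(1) by simp_all
  then show "(!) ?xs ` {..<s} \<subseteq> S"
    using assms(2) nth_mem[of _ ?xs] by fastforce
qed

lemma sum_le_card_large_plus:
  fixes f :: "'a \<Rightarrow> real"
  assumes "finite X" "0 \<le> a" "\<And>x. x \<in> X \<Longrightarrow> f x \<le> b"
  shows "sum f X \<le> b * real (card {x\<in>X. a \<le> f x}) + a * real (card X)"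
proof -
  have "sum f X = sum f {x\<in>X. a \<le> f x} + sum f {x\<in>X. \<not> a \<le> f x}"
    using assms(1) by (simp add: sum.Int_Diff[of X _ "{x. a \<le> f x}"] Int_def set_diff_eq)
  also have "sum f {x\<in>X. a \<le> f x} \<le> real (card {x\<in>X. a \<le> f x}) * b"
    using assms(3) by (intro sum_bounded_above) auto
  also have "sum f {x\<in>X. \<not> a \<le> f x} \<le> real (card {x\<in>X. \<not> a \<le> f x}) * a"
    by (intro sum_bounded_above) auto
  also have "\<dots> \<le> real (card X) * a"
    using assms(1,2) by (intro mult_right_mono) (auto intro: card_mono)
  finally show ?thesis by (simp add: mult.commute)
qed

lemma binomial_le_power: "n choose k \<le> n ^ k"
  using binomial_fact_pow[of n k] by (metis dual_order.trans fact_ge_1 mult_le_mono2 mult.right_neutral)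

lemma binomial_Suc_ge:
  assumes "2 * t \<le> g"
  shows "real g * real (g choose t) \<le> 2 * (real t + 1) * real (g choose Suc t)"
proof -
  have "Suc t * (g choose Suc t) = (g - t) * (g choose t)"
    using binomial_absorption[of t g] binomial_absorb_comp[of g t] by simp
  then have "(real t + 1) * real (g choose Suc t) = real (g - t) * real (g choose t)"
    by (metis of_nat_Suc of_nat_mult add.commute)
  moreover have "real g * real (g choose t) \<le> 2 * real (g - t) * real (g choose t)"
    using assms by (intro mult_right_mono) auto
  ultimately show ?thesis by (simp add: algebra_simps)
qed

lemma binomial_ge_scaled:
  assumes "r \<le> m" "0 \<le> c" "c * real g \<le> real m"
  shows "(c / real r) ^ r * real (g choose r) \<le> real (m choose r)"
proof -
  have "(c / real r) ^ r * real (g choose r) \<le> (c / real r) ^ r * real g ^ r"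
    using binomial_le_power[of g r] assms(2) by (intro mult_left_mono) (auto simp flip: of_nat_power)
  also have "\<dots> = (c * real g / real r) ^ r" by (simp add: power_mult_distrib power_divide)
  also have "\<dots> \<le> (real m / real r) ^ r"
    using assms(2,3) by (intro power_mono divide_right_mono) auto
  also have "\<dots> \<le> real (m choose r)" by (rule binomial_ge_n_over_k_pow_k[OF assms(1)])
  finally show ?thesis .
qed

lemma power_sum_le_card_power_mult_sum_power:
  fixes x :: "'a \<Rightarrow> real"
  assumes "finite Q" "\<And>q. q \<in> Q \<Longrightarrow> 0 \<le> x q" "t \<ge> 1"
  shows "(\<Sum>q\<in>Q. x q) ^ t \<le> real (card Q) ^ (t - 1) * (\<Sum>q\<in>Q. x q ^ t)"
proof (cases "Q = {}")
  case True
  then show ?thesis using assms(3) by (simp add: power_0_left)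
next
  case False
  define c where "c = real (card Q)"
  have c: "c > 0" using assms(1) False by (simp add: c_def card_gt_0_iff)
  have convex: "convex_on {0..} (\<lambda>y::real. y ^ t)"
    by (cases "even t") (auto intro: convex_on_subset[OF convex_power_even] convex_power_odd)
  have "(\<Sum>q\<in>Q. (1 / c) *\<^sub>R x q) ^ t \<le> (\<Sum>q\<in>Q. (1 / c) * x q ^ t)"
    using assms c by (intro convex_on_sum[OF assms(1) False convex]) (auto simp: c_def)
  then have "((\<Sum>q\<in>Q. x q) / c) ^ t \<le> (\<Sum>q\<in>Q. x q ^ t) / c"
    by (simp add: sum_distrib_left sum_divide_distrib)
  then have "(\<Sum>q\<in>Q. x q) ^ t \<le> (\<Sum>q\<in>Q. x q ^ t) / c * c ^ t"
    using c by (simp add: power_divide field_simps)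
  also have "\<dots> = c ^ (t - 1) * (\<Sum>q\<in>Q. x q ^ t)"
    using c assms(3) by (simp add: field_simps power_eq_if)
  finally show ?thesis by (simp add: c_def)
qed

lemma sum_choose_ge_choose_sum:
  fixes d :: "'a \<Rightarrow> nat"
  assumes "finite Q" "card Q \<le> s" "1 \<le> t"
  shows "fact t / (real t ^ t * real s ^ (t - 1)) * real ((\<Sum>q\<in>Q. d q) choose t) - real s
           \<le> (\<Sum>q\<in>Q. real (d q choose t))"
proof (cases "Q = {}")
  case True
  then show ?thesis using assms(3) by (simp add: binomial_eq_0)
next
  case False
  define D where "D = (\<Sum>q\<in>Q. d q)"
  have "0 < card Q" using assms(1) False by (simp add: card_gt_0_iff)
  then have pos: "0 < real s ^ (t - 1)" "0 < real t ^ t" using assms(2,3) by auto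
  have "(\<Sum>q\<in>Q. real (d q) ^ t) / real t ^ t - real (card Q) = (\<Sum>q\<in>Q. (real (d q) / real t) ^ t - 1)"
    by (simp add: sum_subtractf power_divide sum_divide_distrib)
  also have "\<dots> \<le> (\<Sum>q\<in>Q. real (d q choose t))"
  proof (rule sum_mono)
    fix q
    show "(real (d q) / real t) ^ t - 1 \<le> real (d q choose t)"
    proof (cases "t \<le> d q")
      case True
      then show ?thesis using binomial_ge_n_over_k_pow_k[of t "d q", where 'a = real] by simp
    next
      case False
      then have "(real (d q) / real t) ^ t \<le> 1" by (intro power_le_one) auto
      then show ?thesis by simp
    qed
  qed
  finally have lower: "(\<Sum>q\<in>Q. real (d q) ^ t) / real t ^ t - real s \<le> (\<Sum>q\<in>Q. real (d q choose t))"
    using assms(2) by linarith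
  have "fact t * real (D choose t) \<le> real D ^ t"
    using binomial_fact_pow[of D t] by (metis mult.commute of_nat_fact of_nat_le_iff of_nat_mult of_nat_power)
  also have "\<dots> \<le> real (card Q) ^ (t - 1) * (\<Sum>q\<in>Q. real (d q) ^ t)"
    using power_sum_le_card_power_mult_sum_power[OF assms(1) _ assms(3), of "\<lambda>q. real (d q)"]
    by (simp add: D_def)
  also have "\<dots> \<le> real s ^ (t - 1) * (\<Sum>q\<in>Q. real (d q) ^ t)"
    using assms(2) by (intro mult_right_mono power_mono sum_nonneg) auto
  finally have "fact t / (real t ^ t * real s ^ (t - 1)) * real (D choose t) \<le> (\<Sum>q\<in>Q. real (d q) ^ t) / real t ^ t"
    using pos by (simp add: field_simps)
  with lower show ?thesis unfolding D_def by linarith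
qed

section \<open>Ordered blow-ups in dense hypergraphs\<close>

definition transversal :: "nat \<Rightarrow> nat \<Rightarrow> (nat \<Rightarrow> nat) \<Rightarrow> bool" where
  "transversal t r h \<longleftrightarrow> (\<forall>a<t. a * r \<le> h a \<and> h a < Suc a * r)"

text \<open>The images under \<open>u\<close> of the intervals \<open>{a * r..<Suc a * r}\<close>, \<open>a < t\<close>, are \<open>t\<close> consecutive
  groups of \<open>r\<close> elements of \<open>G\<close>, and every transversal of the groups is an edge of \<open>H\<close>: an
  ordered copy of the complete \<open>t\<close>-partite \<open>t\<close>-graph with parts of size \<open>r\<close>.\<close>

definition ordered_blowup :: "nat \<Rightarrow> nat \<Rightarrow> (nat \<Rightarrow> 'a::linorder) \<Rightarrow> 'a set \<Rightarrow> 'a set set \<Rightarrow> bool" where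
  "ordered_blowup t r u G H \<longleftrightarrow> strict_mono_on {..<t * r} u \<and> u ` {..<t * r} \<subseteq> G \<and>
     (\<forall>h. transversal t r h \<longrightarrow> u ` h ` {..<t} \<in> H)"

lemma ordered_blowup_mono:
  assumes "ordered_blowup t r u G H" "G \<subseteq> G'" "H \<subseteq> H'"
  shows "ordered_blowup t r u G' H'"
  using assms by (auto simp: ordered_blowup_def)

definition upper_link :: "'a::linorder set \<Rightarrow> 'a set set \<Rightarrow> 'a set \<Rightarrow> 'a set" where
  "upper_link G H P = {z\<in>G. insert z P \<in> H \<and> (\<forall>p\<in>P. p < z)}"

lemma card_le_sum_upper_link:
  assumes "finite G" "H \<subseteq> [G]\<^bsup>Suc t\<^esup>"
  shows "card H \<le> (\<Sum>P\<in>[G]\<^bsup>t\<^esup>. card (upper_link G H P))"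
proof -
  let ?\<P> = "[G]\<^bsup>t\<^esup>"
  have fin: "finite ?\<P>" "\<And>P. finite (upper_link G H P)"
    using assms(1) finite_imp_finite_nsets by (auto simp: upper_link_def)
  have "H \<subseteq> (\<lambda>(P, z). insert z P) ` (SIGMA P:?\<P>. upper_link G H P)"
  proof
    fix T assume T: "T \<in> H"
    then have "T \<subseteq> G" "finite T" "card T = Suc t" using assms(2) by (auto simp: nsets_def)
    define z where "z = Max T"
    have "T \<noteq> {}" using \<open>card T = Suc t\<close> by auto
    then have "z \<in> T" using Max_in[OF \<open>finite T\<close>] by (simp add: z_def)
    have "\<forall>p\<in>T - {z}. p < z"
      using Max_ge[OF \<open>finite T\<close>] by (simp add: z_def le_neq_trans)
    with \<open>z \<in> T\<close> T \<open>T \<subseteq> G\<close> \<open>finite T\<close> \<open>card T = Suc t\<close>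
    have "T - {z} \<in> ?\<P>" "z \<in> upper_link G H (T - {z})" "T = insert z (T - {z})"
      by (auto simp: nsets_def upper_link_def insert_absorb)
    then show "T \<in> (\<lambda>(P, z). insert z P) ` (SIGMA P:?\<P>. upper_link G H P)"
      by (intro image_eqI[where x = "(T - {z}, z)"]) simp_all
  qed
  then have "card H \<le> card ((\<lambda>(P, z). insert z P) ` (SIGMA P:?\<P>. upper_link G H P))"
    using fin by (intro card_mono finite_imageI) auto
  also have "\<dots> \<le> card (SIGMA P:?\<P>. upper_link G H P)"
    using fin by (intro card_image_le) auto
  also have "\<dots> = (\<Sum>P\<in>?\<P>. card (upper_link G H P))"
    using fin by (simp add: card_SigmaI)
  finally show ?thesis .
qed

lemma sum_card_supersets:
  assumes "finite G" "finite \<P>" "\<And>P. P \<in> \<P> \<Longrightarrow> L P \<subseteq> G"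
  shows "(\<Sum>Z\<in>[G]\<^bsup>r\<^esup>. card {P\<in>\<P>. Z \<subseteq> L P}) = (\<Sum>P\<in>\<P>. card (L P) choose r)"
proof -
  have "(\<Sum>Z\<in>[G]\<^bsup>r\<^esup>. card {P\<in>\<P>. Z \<subseteq> L P}) = (\<Sum>P\<in>\<P>. card {Z\<in>[G]\<^bsup>r\<^esup>. Z \<subseteq> L P})"
    using sum.swap_restrict[of "[G]\<^bsup>r\<^esup>" \<P> "\<lambda>_ _. 1::nat" "\<lambda>Z P. Z \<subseteq> L P"] assms(1,2)
    by (simp add: finite_imp_finite_nsets)
  also have "\<dots> = (\<Sum>P\<in>\<P>. card ([L P]\<^bsup>r\<^esup>))"
    using assms(3) by (intro sum.cong refl arg_cong[where f = card]) (auto simp: nsets_def)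
  finally show ?thesis by simp
qed

lemma sum_choose_ge_of_large_average:
  fixes f :: "'a \<Rightarrow> nat"
  assumes "finite X" "\<And>x. x \<in> X \<Longrightarrow> f x \<le> g" "4 * \<beta> * real g * real (card X) \<le> (\<Sum>x\<in>X. real (f x))"
    and "\<beta> > 0" "0 < r" "real r \<le> 2 * \<beta> * real g"
  shows "2 * \<beta> * (2 * \<beta> / real r) ^ r * real (card X) * real (g choose r) \<le> (\<Sum>x\<in>X. real (f x choose r))"
proof -
  define Large where "Large = {x\<in>X. 2 * \<beta> * real g \<le> real (f x)}"
  have "0 < 2 * \<beta> * real g" using assms(5,6) by linarith
  then have g: "real g > 0" using assms(4) by (simp add: zero_less_mult_iff)
  have "(\<Sum>x\<in>X. real (f x)) \<le> real g * real (card Large) + 2 * \<beta> * real g * real (card X)"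
    unfolding Large_def using assms(1,2,4) by (intro sum_le_card_large_plus) auto
  with assms(3) have "2 * \<beta> * real (card X) * real g \<le> real (card Large) * real g"
    by (simp add: algebra_simps)
  with g have card_Large: "2 * \<beta> * real (card X) \<le> real (card Large)" by simp
  have "2 * \<beta> * (2 * \<beta> / real r) ^ r * real (card X) * real (g choose r)
          \<le> real (card Large) * ((2 * \<beta> / real r) ^ r * real (g choose r))"
    using mult_right_mono[OF card_Large, of "(2 * \<beta> / real r) ^ r * real (g choose r)"] assms(4)
    by (simp add: algebra_simps)
  also have "\<dots> \<le> (\<Sum>x\<in>Large. real (f x choose r))"
    using sum_bounded_below[of Large "(2 * \<beta> / real r) ^ r * real (g choose r)" "\<lambda>x. real (f x choose r)"]
      binomial_ge_scaled assms(4,6) by (force simp: Large_def)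
  also have "\<dots> \<le> (\<Sum>x\<in>X. real (f x choose r))"
    using assms(1) by (intro sum_mono2) (auto simp: Large_def)
  finally show ?thesis .
qed

lemma obtain_rich_upper_link:
  assumes G: "finite G" "2 * t \<le> card G" "r \<le> card G" and "0 < r" "0 < \<beta>" "real r \<le> 2 * \<beta> * real (card G)"
    and H: "H \<subseteq> [G]\<^bsup>Suc t\<^esup>" "8 * (real t + 1) * \<beta> * real (card G choose Suc t) \<le> real (card H)"
  obtains Z where "Z \<in> [G]\<^bsup>r\<^esup>"
    "2 * \<beta> * (2 * \<beta> / real r) ^ r * real (card G choose t) \<le> real (card {P\<in>[G]\<^bsup>t\<^esup>. Z \<subseteq> upper_link G H P})"
proof -
  define g where "g = card G"
  let ?\<P> = "[G]\<^bsup>t\<^esup>" and ?L = "upper_link G H"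
  have "4 * \<beta> * real g * real (g choose t) \<le> 4 * \<beta> * (2 * (real t + 1) * real (g choose Suc t))"
    using binomial_Suc_ge[OF G(2)[folded g_def]] assms(5) by (simp add: mult.assoc)
  also have "\<dots> = 8 * (real t + 1) * \<beta> * real (g choose Suc t)" by simp
  also have "\<dots> \<le> real (card H)" using H(2) by (simp add: g_def)
  also have "\<dots> \<le> (\<Sum>P\<in>?\<P>. real (card (?L P)))"
    using card_le_sum_upper_link[OF G(1) H(1)] by (simp flip: of_nat_sum)
  finally have "2 * \<beta> * (2 * \<beta> / real r) ^ r * real (card ?\<P>) * real (g choose r)
      \<le> (\<Sum>P\<in>?\<P>. real (card (?L P) choose r))"
    using G(1) assms(4-6) by (intro sum_choose_ge_of_large_average)
      (auto simp: g_def finite_imp_finite_nsets upper_link_def intro: card_mono)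
  also have "\<dots> = (\<Sum>Z\<in>[G]\<^bsup>r\<^esup>. real (card {P\<in>?\<P>. Z \<subseteq> ?L P}))"
    using sum_card_supersets[OF G(1) finite_imp_finite_nsets[OF G(1)], where L = ?L and r = r]
    by (simp add: upper_link_def flip: of_nat_sum)
  finally have "2 * \<beta> * (2 * \<beta> / real r) ^ r * real (g choose t) * real (card ([G]\<^bsup>r\<^esup>))
      \<le> (\<Sum>Z\<in>[G]\<^bsup>r\<^esup>. real (card {P\<in>?\<P>. Z \<subseteq> ?L P}))"
    by (simp add: g_def)
  moreover have "[G]\<^bsup>r\<^esup> \<noteq> {}" using G(1,3) by (simp add: nsets_eq_empty_iff)
  ultimately obtain Z where "Z \<in> [G]\<^bsup>r\<^esup>"
    "2 * \<beta> * (2 * \<beta> / real r) ^ r * real (g choose t) \<le> real (card {P\<in>?\<P>. Z \<subseteq> ?L P})"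
    using obtain_ge_average[OF finite_imp_finite_nsets[OF G(1)]] by blast
  then show ?thesis using that by (simp add: g_def)
qed

lemma transversal_through:
  assumes "i < t * r"
  obtains h where "transversal t r h" "i \<in> h ` {..<t}"
proof -
  define a where "a = i div r"
  have "0 < r" using assms by (cases r) auto
  then have a: "a < t" "a * r \<le> i" "i < Suc a * r"
    using assms dividend_less_div_times[of r i]
    by (auto simp: a_def less_mult_imp_div_less div_times_less_eq_dividend)
  define h where "h b = (if b = a then i else b * r)" for b
  have "transversal t r h" using a \<open>0 < r\<close> by (auto simp: transversal_def h_def)
  moreover have "i \<in> h ` {..<t}" using a(1) by (force simp: h_def)
  ultimately show ?thesis by (rule that)
qed

lemma strict_mono_on_concat:
  fixes m r :: nat
  assumes "strict_mono_on {..<m} u" "strict_mono_on {..<r} \<sigma>" "\<And>i j. i < m \<Longrightarrow> j < r \<Longrightarrow> u i < \<sigma> j"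
  shows "strict_mono_on {..<m + r} (\<lambda>i. if i < m then u i else \<sigma> (i - m))"
proof (rule strict_mono_onI)
  fix i j assume ij: "i \<in> {..<m + r}" "j \<in> {..<m + r}" "i < j"
  consider "j < m" | "i < m" "m \<le> j" | "m \<le> i" by force
  then show "(if i < m then u i else \<sigma> (i - m)) < (if j < m then u j else \<sigma> (j - m))"
  proof cases
    case 1
    then show ?thesis using ij assms(1) by (simp add: strict_mono_on_def)
  next
    case 2
    then show ?thesis using ij assms(3) by simp
  next
    case 3
    then have "\<not> i < m" "\<not> j < m" "i - m < j - m" "j - m < r" using ij by auto
    then show ?thesis using assms(2) by (simp add: strict_mono_on_def)
  qed
qed

lemma ordered_blowup_extend:
  assumes u: "ordered_blowup t r u G {P\<in>[G]\<^bsup>t\<^esup>. Z \<subseteq> upper_link G H P}"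
    and Z: "finite Z" "card Z = r" "Z \<subseteq> G"
  shows "\<exists>v. ordered_blowup (Suc t) r v G H"
proof -
  obtain \<sigma> where \<sigma>: "strict_mono_on {..<r} \<sigma>" "\<sigma> ` {..<r} \<subseteq> Z"
    using obtain_strict_mono_enumeration[OF Z(1)] Z(2) by auto
  have link: "Z \<subseteq> upper_link G H (u ` h ` {..<t})" if "transversal t r h" for h
    using u that by (auto simp: ordered_blowup_def)
  have below: "u i < z" if i: "i < t * r" and z: "z \<in> Z" for i z
  proof -
    obtain h where "transversal t r h" "i \<in> h ` {..<t}" using transversal_through[OF i] .
    then show ?thesis using link z unfolding upper_link_def by blast
  qed
  define v where "v i = (if i < t * r then u i else \<sigma> (i - t * r))" for i
  have "strict_mono_on {..<t * r + r} v"
    unfolding v_def using u \<sigma> below by (intro strict_mono_on_concat) (auto simp: ordered_blowup_def)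
  moreover have "v i \<in> G" if "i < Suc t * r" for i
  proof (cases "i < t * r")
    case True
    then show ?thesis using u by (auto simp: v_def ordered_blowup_def)
  next
    case False
    then have "i - t * r < r" using that by simp
    then show ?thesis using False \<sigma>(2) Z(3) by (auto simp: v_def)
  qed
  moreover have "v ` h ` {..<Suc t} \<in> H" if "transversal (Suc t) r h" for h
  proof -
    have h: "transversal t r h" "t * r \<le> h t" "h t < Suc t * r"
      using that by (auto simp: transversal_def)
    have "h a < t * r" if "a < t" for a
      using h(1) that mult_le_mono1[of "Suc a" t r] by (fastforce simp: transversal_def)
    then have "v ` h ` {..<t} = u ` h ` {..<t}" by (auto simp: v_def)
    moreover have "v (h t) \<in> Z" using h(2,3) \<sigma>(2) by (auto simp: v_def)
    ultimately have "insert (v (h t)) (v ` h ` {..<t}) \<in> H"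
      using link[OF h(1)] by (auto simp: upper_link_def)
    then show ?thesis by (simp add: lessThan_Suc)
  qed
  ultimately show ?thesis unfolding ordered_blowup_def by (auto simp: add.commute)
qed

lemma ordered_blowup_in_dense_family:
  fixes \<delta> :: real
  assumes "0 < r" "0 < \<delta>"
  shows "\<exists>g0. \<forall>(G :: 'a::linorder set) H. finite G \<longrightarrow> g0 \<le> card G \<longrightarrow> H \<subseteq> [G]\<^bsup>t\<^esup> \<longrightarrow>
           \<delta> * real (card G choose t) \<le> real (card H) \<longrightarrow> (\<exists>u. ordered_blowup t r u G H)"
  using assms(2)
proof (induction t arbitrary: \<delta>)
  case 0
  have "ordered_blowup 0 r u G H" if "H \<subseteq> [G]\<^bsup>0\<^esup>" "\<delta> * 1 \<le> real (card H)" for u and G :: "'a set" and H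
  proof -
    have "H = {{}}" using that 0 by (auto simp: subset_singleton_iff)
    then show ?thesis by (simp add: ordered_blowup_def)
  qed
  then show ?case by auto
next
  case (Suc t)
  define \<beta> where "\<beta> = \<delta> / (8 * (real t + 1))"
  have \<beta>: "0 < \<beta>" using Suc.prems by (simp add: \<beta>_def)
  define \<delta>' where "\<delta>' = 2 * \<beta> * (2 * \<beta> / real r) ^ r"
  have "0 < \<delta>'" using \<beta> assms(1) by (simp add: \<delta>'_def)
  then obtain g0' where g0': "\<And>(G :: 'a set) H. finite G \<Longrightarrow> g0' \<le> card G \<Longrightarrow> H \<subseteq> [G]\<^bsup>t\<^esup> \<Longrightarrow>
      \<delta>' * real (card G choose t) \<le> real (card H) \<Longrightarrow> \<exists>u. ordered_blowup t r u G H"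
    using Suc.IH by blast
  show ?case
  proof (intro exI[of _ "max g0' (max (2 * t) (max r (nat \<lceil>real r / (2 * \<beta>)\<rceil>)))"] allI impI)
    fix G :: "'a set" and H
    assume G: "finite G" "max g0' (max (2 * t) (max r (nat \<lceil>real r / (2 * \<beta>)\<rceil>))) \<le> card G"
      and H: "H \<subseteq> [G]\<^bsup>Suc t\<^esup>" "\<delta> * real (card G choose Suc t) \<le> real (card H)"
    have g: "g0' \<le> card G" "2 * t \<le> card G" "r \<le> card G" "real r \<le> 2 * \<beta> * real (card G)"
      using G(2) \<beta> by (auto simp: field_simps)
    obtain Z where "Z \<in> [G]\<^bsup>r\<^esup>" "\<delta>' * real (card G choose t) \<le> real (card {P\<in>[G]\<^bsup>t\<^esup>. Z \<subseteq> upper_link G H P})"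
      using obtain_rich_upper_link[OF G(1) g(2,3) assms(1) \<beta> g(4) H(1)] H(2) by (auto simp: \<beta>_def \<delta>'_def)
    moreover obtain u where "ordered_blowup t r u G {P\<in>[G]\<^bsup>t\<^esup>. Z \<subseteq> upper_link G H P}"
      using g0'[OF G(1) g(1), of "{P\<in>[G]\<^bsup>t\<^esup>. Z \<subseteq> upper_link G H P}"] calculation(2) by auto
    ultimately show "\<exists>u. ordered_blowup (Suc t) r u G H"
      by (intro ordered_blowup_extend) (auto simp: nsets_def)
  qed
qed

lemma block_idx_less:
  assumes "q < q'" "x \<in> block_idx n k q" "y \<in> block_idx n k q'"
  shows "x < y"
proof -
  have "Suc q * (n div k) \<le> q' * (n div k)" using assms(1) by (intro mult_le_mono1) simp
  then show ?thesis using assms(2,3) by (auto simp: block_idx_def)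
qed

lemma block_idx_subset:
  assumes "q < k" "k dvd n"
  shows "block_idx n k q \<subseteq> {..<n}"
proof -
  obtain m where n: "n = k * m" using assms(2) by blast
  have "Suc q * m \<le> k * m" using assms(1) by (intro mult_le_mono1) simp
  then show ?thesis using n assms by (auto simp: block_idx_def)
qed

lemma lessThan_eq_UN_block_idx:
  assumes "0 < k" "k dvd n"
  shows "{..<n} = (\<Union>q<k. block_idx n k q)"
proof -
  obtain m where n: "n = k * m" using assms(2) by blast
  have "x \<in> block_idx n k (x div m)" "x div m < k" if "x < n" for x
  proof -
    have "0 < m" using that n by (cases m) auto
    then show "x \<in> block_idx n k (x div m)" "x div m < k"
      using that assms(1) n dividend_less_div_times[of m x]
      by (auto simp: block_idx_def div_times_less_eq_dividend less_mult_imp_div_less)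
  qed
  then show ?thesis using block_idx_subset[OF _ assms(2)] by blast
qed

lemma card_eq_sum_blocks:
  assumes "0 < k" "k dvd n" "X \<subseteq> {..<n}"
  shows "card X = (\<Sum>q<k. card (X \<inter> block_idx n k q))"
proof -
  have "X = (\<Union>q<k. X \<inter> block_idx n k q)"
    using assms lessThan_eq_UN_block_idx[OF assms(1,2)] by blast
  also have "card \<dots> = (\<Sum>q<k. card (X \<inter> block_idx n k q))"
  proof (rule card_UN_disjoint)
    show "\<forall>q\<in>{..<k}. finite (X \<inter> block_idx n k q)" by (simp add: block_idx_def)
    show "\<forall>q\<in>{..<k}. \<forall>q'\<in>{..<k}. q \<noteq> q' \<longrightarrow> X \<inter> block_idx n k q \<inter> (X \<inter> block_idx n k q') = {}"
      using block_idx_less[of _ _ _ n k] by (metis disjoint_iff Int_iff less_irrefl nat_neq_iff)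
  qed simp
  finally show ?thesis .
qed

section \<open>Embedding the forbidden pattern\<close>

lemma row_partite_obtain_labelling:
  assumes "row_partite t r s A"
  obtains \<beta> where "mono_on {..<r} \<beta>" "\<And>i. i < r \<Longrightarrow> \<beta> i < t"
    "\<And>i i' j. i < r \<Longrightarrow> i' < r \<Longrightarrow> j < s \<Longrightarrow> \<beta> i = \<beta> i' \<Longrightarrow> A i j \<Longrightarrow> A i' j \<Longrightarrow> i = i'"
proof -
  obtain c :: "nat \<Rightarrow> nat" where c: "c 0 = 0" "c t = r"
    and one: "\<And>l j. l < t \<Longrightarrow> j < s \<Longrightarrow> card {i. c l \<le> i \<and> i < c (Suc l) \<and> A i j} \<le> 1"
    using assms unfolding row_partite_def by blast
  define \<beta> where "\<beta> i = (LEAST l. i < c (Suc l))" for i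
  have band: "\<beta> i < t \<and> c (\<beta> i) \<le> i \<and> i < c (Suc (\<beta> i))" if "i < r" for i
  proof -
    have "t \<noteq> 0" using c that by (cases t) auto
    then have ex: "i < c (Suc (t - 1))" using c that by simp
    have "i < c (Suc (\<beta> i))" unfolding \<beta>_def using ex by (rule LeastI)
    moreover have "\<beta> i \<le> t - 1" unfolding \<beta>_def using ex by (rule Least_le)
    moreover have "c (\<beta> i) \<le> i"
    proof (cases "\<beta> i")
      case (Suc l)
      then have "\<not> i < c (Suc l)" using not_less_Least[of l "\<lambda>l. i < c (Suc l)"] by (simp add: \<beta>_def)
      then show ?thesis using Suc by simp
    qed (simp add: c)
    ultimately show ?thesis using \<open>t \<noteq> 0\<close> by linarith
  qed
  show ?thesis
  proof
    show "mono_on {..<r} \<beta>"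
    proof (rule mono_onI)
      fix i i' assume "i \<in> {..<r}" "i' \<in> {..<r}" "i \<le> i'"
      then have "i < c (Suc (\<beta> i'))" using band[of i'] by auto
      then show "\<beta> i \<le> \<beta> i'" unfolding \<beta>_def[of i] by (rule Least_le)
    qed
    show "\<beta> i < t" if "i < r" for i using band[OF that] by simp
    fix i i' j assume ij: "i < r" "i' < r" "j < s" "\<beta> i = \<beta> i'" "A i j" "A i' j"
    let ?I = "{x. c (\<beta> i) \<le> x \<and> x < c (Suc (\<beta> i)) \<and> A x j}"
    have "finite ?I" by (rule finite_subset[of _ "{..<c (Suc (\<beta> i))}"]) auto
    moreover have "card ?I \<le> Suc 0" using one band ij(1,3) by simp
    moreover have "i \<in> ?I" "i' \<in> ?I" using band[OF ij(1)] band[OF ij(2)] ij(4-6) by auto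
    ultimately show "i = i'" using card_le_Suc0_iff_eq by blast
  qed
qed

definition common_nbhd :: "(nat \<Rightarrow> nat \<Rightarrow> bool) \<Rightarrow> nat \<Rightarrow> nat set \<Rightarrow> nat set" where
  "common_nbhd M n R = {j. j < n \<and> (\<forall>i\<in>R. M i j)}"

definition blocks_met :: "(nat \<Rightarrow> nat \<Rightarrow> bool) \<Rightarrow> nat \<Rightarrow> nat \<Rightarrow> nat set \<Rightarrow> nat set" where
  "blocks_met M n k R = {q. q < k \<and> common_nbhd M n R \<inter> block_idx n k q \<noteq> {}}"

lemma transversal_through_rows:
  assumes "0 < r" "\<And>i. i < r \<Longrightarrow> \<beta> i < t"
    and "\<And>i i'. i < r \<Longrightarrow> i' < r \<Longrightarrow> \<beta> i = \<beta> i' \<Longrightarrow> A i j \<Longrightarrow> A i' j \<Longrightarrow> i = i'"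
  shows "\<exists>h. transversal t r h \<and> (\<forall>i<r. A i j \<longrightarrow> h (\<beta> i) = \<beta> i * r + i)"
proof -
  let ?row = "\<lambda>a i. i < r \<and> \<beta> i = a \<and> A i j"
  define h where "h a = a * r + (if \<exists>i. ?row a i then SOME i. ?row a i else 0)" for a
  have "(if \<exists>i. ?row a i then SOME i. ?row a i else 0) < r" for a
    using assms(1) someI_ex[of "?row a"] by auto
  then have "transversal t r h" by (simp add: transversal_def h_def)
  moreover have "h (\<beta> i) = \<beta> i * r + i" if "i < r" "A i j" for i
  proof -
    have "?row (\<beta> i) (SOME i'. ?row (\<beta> i) i')" using that by (intro someI) auto
    then show ?thesis using that assms(3) by (auto simp: h_def)
  qed
  ultimately show ?thesis by blast
qed

text \<open>A column of \<open>A\<close> has at most one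
  \<open>1\<close> in each interval of \<open>\<beta>\<close>, so the slots of its \<open>1\<close>s lie on a common transversal.\<close>

lemma obtain_row_embedding:
  assumes A: "row_partite t r s A" and "0 < r" and u: "strict_mono_on {..<t * r} u"
  obtains f h where "strict_mono_on {..<r} f" "f ` {..<r} \<subseteq> u ` {..<t * r}"
    "\<And>j. j < s \<Longrightarrow> transversal t r (h j)"
    "\<And>i j. i < r \<Longrightarrow> j < s \<Longrightarrow> A i j \<Longrightarrow> f i \<in> u ` h j ` {..<t}"
proof -
  obtain \<beta> where \<beta>: "mono_on {..<r} \<beta>" "\<And>i. i < r \<Longrightarrow> \<beta> i < t"
    "\<And>i i' j. i < r \<Longrightarrow> i' < r \<Longrightarrow> j < s \<Longrightarrow> \<beta> i = \<beta> i' \<Longrightarrow> A i j \<Longrightarrow> A i' j \<Longrightarrow> i = i'"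
    using row_partite_obtain_labelling[OF A] by blast
  define f where "f i = u (\<beta> i * r + i)" for i
  have slot: "\<beta> i * r + i < t * r" if "i < r" for i
    using \<beta>(2)[OF that] that mult_le_mono1[of "Suc (\<beta> i)" t r] by simp
  have f_mono: "strict_mono_on {..<r} f"
  proof (rule strict_mono_onI)
    fix i i' assume "i \<in> {..<r}" "i' \<in> {..<r}" "i < i'"
    moreover have "\<beta> i \<le> \<beta> i'" using mono_onD[OF \<beta>(1)] calculation by simp
    ultimately have "\<beta> i * r + i < \<beta> i' * r + i'"
      using mult_le_mono1[of "\<beta> i" "\<beta> i'" r] by linarith
    then show "f i < f i'"
      unfolding f_def using slot \<open>i \<in> {..<r}\<close> \<open>i' \<in> {..<r}\<close> by (auto intro: strict_mono_onD[OF u])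
  qed
  have f_range: "f ` {..<r} \<subseteq> u ` {..<t * r}" using slot by (auto simp: f_def)
  have "\<forall>j\<in>{..<s}. \<exists>h. transversal t r h \<and> (\<forall>i<r. A i j \<longrightarrow> h (\<beta> i) = \<beta> i * r + i)"
    using transversal_through_rows[OF \<open>0 < r\<close>, of \<beta> t A] \<beta>(2,3) by blast
  then obtain h where h: "\<And>j. j < s \<Longrightarrow> transversal t r (h j)"
    "\<And>i j. j < s \<Longrightarrow> i < r \<Longrightarrow> A i j \<Longrightarrow> h j (\<beta> i) = \<beta> i * r + i"
    using bchoice[of "{..<s}"] by (metis lessThan_iff)
  have "f i \<in> u ` h j ` {..<t}" if "i < r" "j < s" "A i j" for i j
    using h(2) that \<beta>(2) by (force simp: f_def)
  with f_mono f_range h(1) show ?thesis by (rule that)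
qed

lemma contains_if_ordered_blowup:
  assumes A: "row_partite t r s A" and "0 < r"
    and u: "ordered_blowup t r u {..<n} {R. S \<subseteq> blocks_met M n k R}"
    and S: "s \<le> card S"
  shows "contains n n M r s A"
proof -
  have u_mono: "strict_mono_on {..<t * r} u" and u_range: "u ` {..<t * r} \<subseteq> {..<n}"
    and u_edges: "\<And>h. transversal t r h \<Longrightarrow> S \<subseteq> blocks_met M n k (u ` h ` {..<t})"
    using u by (auto simp: ordered_blowup_def)
  obtain f h where f: "strict_mono_on {..<r} f" "f ` {..<r} \<subseteq> u ` {..<t * r}"
    and h: "\<And>j. j < s \<Longrightarrow> transversal t r (h j)"
    and edges: "\<And>i j. i < r \<Longrightarrow> j < s \<Longrightarrow> A i j \<Longrightarrow> f i \<in> u ` h j ` {..<t}"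
    using obtain_row_embedding[OF A \<open>0 < r\<close> u_mono] by blast
  have "transversal t r (\<lambda>a. a * r)" using \<open>0 < r\<close> by (simp add: transversal_def)
  then have "S \<subseteq> {..<k}" using u_edges unfolding blocks_met_def by blast
  then have "finite S" by (rule finite_subset) simp
  then obtain \<sigma> where \<sigma>: "strict_mono_on {..<s} \<sigma>" "\<sigma> ` {..<s} \<subseteq> S"
    using obtain_strict_mono_enumeration S by blast
  have "\<exists>x. x \<in> common_nbhd M n (u ` h j ` {..<t}) \<inter> block_idx n k (\<sigma> j)" if "j < s" for j
    using u_edges[OF h[OF that]] \<sigma>(2) that by (auto simp: blocks_met_def)
  then obtain g where g: "\<And>j. j < s \<Longrightarrow> g j \<in> common_nbhd M n (u ` h j ` {..<t}) \<inter> block_idx n k (\<sigma> j)"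
    using bchoice[of "{..<s}"] by (metis lessThan_iff)
  have g_mono: "strict_mono_on {..<s} g"
  proof (rule strict_mono_onI)
    fix j j' assume "j \<in> {..<s}" "j' \<in> {..<s}" "j < j'"
    then have "\<sigma> j < \<sigma> j'" "g j \<in> block_idx n k (\<sigma> j)" "g j' \<in> block_idx n k (\<sigma> j')"
      using g strict_mono_onD[OF \<sigma>(1)] by auto
    then show "g j < g j'" by (rule block_idx_less)
  qed
  have "M (f i) (g j)" if "i < r" "j < s" "A i j" for i j
    using edges[OF that] g[OF that(2)] by (auto simp: common_nbhd_def)
  moreover have "f ` {..<r} \<subseteq> {..<n}" "g ` {..<s} \<subseteq> {..<n}"
    using f(2) u_range g by (auto simp: common_nbhd_def)
  ultimately show ?thesis unfolding contains_def using f(1) g_mono by blast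
qed

section \<open>Counting copies of K_{t,t}\<close>

lemma Ktt_count_eq_sum:
  assumes "finite Rs" "finite Cs"
  shows "Ktt_count t M Rs Cs = (\<Sum>R\<in>[Rs]\<^bsup>t\<^esup>. card {j\<in>Cs. \<forall>i\<in>R. M i j} choose t)"
proof -
  have "{(R, C). R \<subseteq> Rs \<and> card R = t \<and> C \<subseteq> Cs \<and> card C = t \<and> (\<forall>i\<in>R. \<forall>j\<in>C. M i j)}
      = (SIGMA R:[Rs]\<^bsup>t\<^esup>. [{j\<in>Cs. \<forall>i\<in>R. M i j}]\<^bsup>t\<^esup>)"
    using assms by (auto simp: nsets_def intro: finite_subset)
  then have "Ktt_count t M Rs Cs = card (SIGMA R:[Rs]\<^bsup>t\<^esup>. [{j\<in>Cs. \<forall>i\<in>R. M i j}]\<^bsup>t\<^esup>)"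
    by (simp add: Ktt_count_def)
  also have "\<dots> = (\<Sum>R\<in>[Rs]\<^bsup>t\<^esup>. card ([{j\<in>Cs. \<forall>i\<in>R. M i j}]\<^bsup>t\<^esup>))"
    using assms by (intro card_SigmaI) (auto simp: finite_imp_finite_nsets)
  finally show ?thesis by simp
qed

lemma Ktt_count_eq_sum_common_nbhd:
  assumes "finite Rs"
  shows "Ktt_count t M Rs {..<n} = (\<Sum>R\<in>[Rs]\<^bsup>t\<^esup>. card (common_nbhd M n R) choose t)"
  using Ktt_count_eq_sum[OF assms] by (simp add: common_nbhd_def)

lemma sum_choose_common_nbhd:
  assumes "finite \<R>"
  shows "(\<Sum>R\<in>\<R>. card (common_nbhd M n R) choose t) = (\<Sum>C\<in>[{..<n}]\<^bsup>t\<^esup>. card {R\<in>\<R>. \<forall>i\<in>R. \<forall>j\<in>C. M i j})"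
proof -
  have "card (common_nbhd M n R) choose t = card {C\<in>[{..<n}]\<^bsup>t\<^esup>. \<forall>i\<in>R. \<forall>j\<in>C. M i j}" for R
  proof -
    have "{C\<in>[{..<n}]\<^bsup>t\<^esup>. \<forall>i\<in>R. \<forall>j\<in>C. M i j} = [common_nbhd M n R]\<^bsup>t\<^esup>"
      by (auto simp: nsets_def common_nbhd_def)
    then show ?thesis by simp
  qed
  then show ?thesis
    using sum.swap_restrict[OF assms finite_imp_finite_nsets[of "{..<n}" t], of "\<lambda>_ _. 1::nat"] by simp
qed

lemma sum_Ktt_count_blocks:
  assumes "finite Rs" "k dvd n"
  shows "(\<Sum>q<k. Ktt_count t M Rs (block_idx n k q))
           = (\<Sum>R\<in>[Rs]\<^bsup>t\<^esup>. \<Sum>q<k. card (common_nbhd M n R \<inter> block_idx n k q) choose t)"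
proof -
  have "Ktt_count t M Rs (block_idx n k q) = (\<Sum>R\<in>[Rs]\<^bsup>t\<^esup>. card (common_nbhd M n R \<inter> block_idx n k q) choose t)"
    if "q < k" for q
  proof -
    have "{j\<in>block_idx n k q. \<forall>i\<in>R. M i j} = common_nbhd M n R \<inter> block_idx n k q" for R
      using block_idx_subset[OF that assms(2)] by (auto simp: common_nbhd_def)
    then show ?thesis using Ktt_count_eq_sum[OF assms(1)] by (simp add: block_idx_def)
  qed
  then show ?thesis by (simp add: sum.swap[of _ "{..<k}"])
qed

lemma Ktt_count_transpose: "Ktt_count t M Rs Cs = Ktt_count t (\<lambda>i j. M j i) Cs Rs"
proof -
  have "{(R, C). R \<subseteq> Cs \<and> card R = t \<and> C \<subseteq> Rs \<and> card C = t \<and> (\<forall>i\<in>R. \<forall>j\<in>C. M j i)}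
     = prod.swap ` {(R, C). R \<subseteq> Rs \<and> card R = t \<and> C \<subseteq> Cs \<and> card C = t \<and> (\<forall>i\<in>R. \<forall>j\<in>C. M i j)}"
    by (auto simp: image_iff)
  then show ?thesis unfolding Ktt_count_def by (simp add: card_image)
qed

lemma contains_transpose:
  assumes "contains n m (\<lambda>i j. M j i) s r (\<lambda>i j. A j i)"
  shows "contains m n M r s A"
proof -
  obtain f g where "strict_mono_on {..<s} f" "f ` {..<s} \<subseteq> {..<n}"
    "strict_mono_on {..<r} g" "g ` {..<r} \<subseteq> {..<m}" "\<forall>i<s. \<forall>j<r. A j i \<longrightarrow> M (g j) (f i)"
    using assms unfolding contains_def by (elim exE conjE) (rule that)
  then show ?thesis unfolding contains_def by (intro exI[of _ g] exI[of _ f]) simp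
qed

lemma row_partite_transpose: "column_partite t r s A \<Longrightarrow> row_partite t s r (\<lambda>i j. A j i)"
  unfolding column_partite_def row_partite_def .

section \<open>Spread and concentrated t-sets of rows\<close>

definition blowup_threshold :: "nat \<Rightarrow> nat \<Rightarrow> real \<Rightarrow> nat \<Rightarrow> bool" where
  "blowup_threshold t r \<delta> g0 \<longleftrightarrow> (\<forall>(G :: nat set) H. finite G \<longrightarrow> g0 \<le> card G \<longrightarrow> H \<subseteq> [G]\<^bsup>t\<^esup> \<longrightarrow>
     \<delta> * real (card G choose t) \<le> real (card H) \<longrightarrow> (\<exists>u. ordered_blowup t r u G H))"

lemma card_spread_subsets_le:
  assumes A: "row_partite t r s A" "0 < r" and not_contains: "\<not> contains n n M r s A"
    and G: "G \<subseteq> {..<n}" "g0 \<le> card G" and g0: "blowup_threshold t r (1 / 2 ^ (k + 1)) g0"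
  shows "real (card {R\<in>[G]\<^bsup>t\<^esup>. s \<le> card (blocks_met M n k R)}) \<le> real (card G choose t) / 2"
proof (rule ccontr)
  define X where "X = {R\<in>[G]\<^bsup>t\<^esup>. s \<le> card (blocks_met M n k R)}"
  define fibre where "fibre S = {R\<in>X. blocks_met M n k R = S}" for S
  assume "\<not> ?thesis"
  then have many: "real (card G choose t) / 2 < real (card X)" by (simp add: X_def)
  have "finite X" using G(1) by (simp add: X_def finite_imp_finite_nsets finite_subset)
  have "X = (\<Union>S\<in>Pow {..<k}. fibre S)" by (auto simp: fibre_def blocks_met_def)
  then have "card X \<le> (\<Sum>S\<in>Pow {..<k}. card (fibre S))" by (metis card_UN_le finite_Pow_iff finite_lessThan)
  then have "real (card X) / 2 ^ k * real (card (Pow {..<k::nat})) \<le> (\<Sum>S\<in>Pow {..<k}. real (card (fibre S)))"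
    by (simp add: card_Pow flip: of_nat_sum)
  then obtain S where "real (card X) / 2 ^ k \<le> real (card (fibre S))"
    using obtain_ge_average[of "Pow {..<k}"] by blast
  moreover have "real (card G choose t) / 2 ^ (k + 1) < real (card X) / 2 ^ k"
    using many by (simp add: field_simps)
  moreover have "finite G" using G(1) finite_subset by blast
  ultimately obtain u where u: "ordered_blowup t r u G (fibre S)"
    using g0 G(2) unfolding blowup_threshold_def by (fastforce simp: fibre_def X_def)
  have "fibre S \<noteq> {}" using u A(2) by (auto simp: ordered_blowup_def transversal_def)
  then have "s \<le> card S" by (auto simp: fibre_def X_def)
  moreover have "ordered_blowup t r u {..<n} {R. S \<subseteq> blocks_met M n k R}"
    using u G(1) by (rule ordered_blowup_mono) (auto simp: fibre_def)
  ultimately show False using contains_if_ordered_blowup[OF A] not_contains by blast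
qed

lemma sum_spread_subsets_le:
  assumes A: "row_partite t r s A" "0 < r" and not_contains: "\<not> contains n n M r s A"
    and Rs: "Rs \<subseteq> {..<n}" and g0: "blowup_threshold t r (1 / 2 ^ (k + 1)) g0"
  shows "(\<Sum>R\<in>{R\<in>[Rs]\<^bsup>t\<^esup>. s \<le> card (blocks_met M n k R)}. real (card (common_nbhd M n R) choose t))
           \<le> real (Ktt_count t M Rs {..<n}) / 2 + real (g0 choose t) * real n ^ t"
proof -
  let ?Cols = "[{..<n}]\<^bsup>t\<^esup>" and ?spread = "{R\<in>[Rs]\<^bsup>t\<^esup>. s \<le> card (blocks_met M n k R)}"
  define rows where "rows C = {i\<in>Rs. \<forall>j\<in>C. M i j}" for C
  define spread_below where "spread_below C = {R\<in>?spread. \<forall>i\<in>R. \<forall>j\<in>C. M i j}" for C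
  have fin: "finite Rs" "finite ?spread"
    using Rs by (auto simp: finite_imp_finite_nsets finite_subset)
  have Ktt: "Ktt_count t M Rs {..<n} = (\<Sum>C\<in>?Cols. card (rows C) choose t)"
    using Ktt_count_eq_sum[of "{..<n}" Rs t "\<lambda>i j. M j i"] fin(1)
    by (simp add: rows_def Ktt_count_transpose[of t M])
  have "(\<Sum>R\<in>?spread. real (card (common_nbhd M n R) choose t)) = (\<Sum>C\<in>?Cols. real (card (spread_below C)))"
    using sum_choose_common_nbhd[OF fin(2), of M n t] by (simp add: spread_below_def flip: of_nat_sum)
  also have "\<dots> \<le> (\<Sum>C\<in>?Cols. real (card (rows C) choose t) / 2 + real (g0 choose t))"
  proof (rule sum_mono)
    fix C
    have eq: "spread_below C = {R\<in>[rows C]\<^bsup>t\<^esup>. s \<le> card (blocks_met M n k R)}"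
      by (auto simp: spread_below_def nsets_def rows_def)
    have rows: "rows C \<subseteq> {..<n}" using Rs by (auto simp: rows_def)
    show "real (card (spread_below C)) \<le> real (card (rows C) choose t) / 2 + real (g0 choose t)"
    proof (cases "g0 \<le> card (rows C)")
      case True
      then show ?thesis
        unfolding eq using card_spread_subsets_le[OF A not_contains rows True g0]
        by (simp add: add_increasing2)
    next
      case False
      have "card (spread_below C) \<le> card ([rows C]\<^bsup>t\<^esup>)"
        unfolding eq using fin(1) by (intro card_mono) (auto simp: rows_def finite_imp_finite_nsets)
      also have "\<dots> \<le> g0 choose t" using False by (simp add: binomial_right_mono)
      finally show ?thesis by simp
    qed
  qed
  also have "\<dots> = real (Ktt_count t M Rs {..<n}) / 2 + real (card ?Cols) * real (g0 choose t)"
    by (simp add: Ktt sum.distrib sum_divide_distrib)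
  also have "\<dots> \<le> real (Ktt_count t M Rs {..<n}) / 2 + real (g0 choose t) * real n ^ t"
    using binomial_le_power[of n t] by (simp add: mult.commute mult_left_mono flip: of_nat_power)
  finally show ?thesis .
qed

lemma sum_block_choose_ge:
  assumes "0 < k" "k dvd n" "1 \<le> t" "card (blocks_met M n k R) \<le> s"
  shows "fact t / (real t ^ t * real s ^ (t - 1)) * real (card (common_nbhd M n R) choose t) - real s
           \<le> (\<Sum>q<k. real (card (common_nbhd M n R \<inter> block_idx n k q) choose t))"
proof -
  let ?N = "common_nbhd M n R" and ?Q = "blocks_met M n k R"
  have Q: "?Q \<subseteq> {..<k}" by (auto simp: blocks_met_def)
  have "card ?N = (\<Sum>q<k. card (?N \<inter> block_idx n k q))"
    by (rule card_eq_sum_blocks[OF assms(1,2)]) (auto simp: common_nbhd_def)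
  also have "\<dots> = (\<Sum>q\<in>?Q. card (?N \<inter> block_idx n k q))"
    using Q by (intro sum.mono_neutral_right) (auto simp: blocks_met_def)
  finally have "fact t / (real t ^ t * real s ^ (t - 1)) * real (card ?N choose t) - real s
      \<le> (\<Sum>q\<in>?Q. real (card (?N \<inter> block_idx n k q) choose t))"
    using sum_choose_ge_choose_sum[OF finite_subset[OF Q] assms(4,3)] by simp
  also have "\<dots> \<le> (\<Sum>q<k. real (card (?N \<inter> block_idx n k q) choose t))"
    using Q by (intro sum_mono2) auto
  finally show ?thesis .
qed

lemma sum_Ktt_count_blocks_ge:
  assumes A: "row_partite t r s A" "0 < r" and "1 \<le> t" "0 < k" "k dvd n"
    and not_contains: "\<not> contains n n M r s A" and Rs: "Rs \<subseteq> {..<n}"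
    and g0: "blowup_threshold t r (1 / 2 ^ (k + 1)) g0"
  shows "fact t / (real t ^ t * real s ^ (t - 1)) * (real (Ktt_count t M Rs {..<n}) / 2 - real (g0 choose t) * real n ^ t)
           - real s * real n ^ t \<le> (\<Sum>q<k. real (Ktt_count t M Rs (block_idx n k q)))"
proof -
  define c where "c = fact t / (real t ^ t * real s ^ (t - 1))"
  define f where "f R = real (card (common_nbhd M n R) choose t)" for R
  define e where "e R = (\<Sum>q<k. real (card (common_nbhd M n R \<inter> block_idx n k q) choose t))" for R
  let ?\<P> = "[Rs]\<^bsup>t\<^esup>"
  let ?spread = "{R\<in>?\<P>. s \<le> card (blocks_met M n k R)}" and ?conc = "{R\<in>?\<P>. \<not> s \<le> card (blocks_met M n k R)}"
  have fin: "finite Rs" "finite ?\<P>" using Rs by (auto simp: finite_imp_finite_nsets finite_subset)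
  have c: "0 \<le> c" by (simp add: c_def)
  have split: "sum g ?\<P> = sum g ?spread + sum g ?conc" for g :: "nat set \<Rightarrow> real"
    using fin(2) by (simp add: sum.Int_Diff[of ?\<P> g "{R. s \<le> card (blocks_met M n k R)}"] Int_def set_diff_eq)
  have "card ?conc \<le> n ^ t"
  proof -
    have "card ?conc \<le> card ?\<P>" using fin(2) by (intro card_mono) auto
    also have "\<dots> \<le> n choose t"
      using Rs by (simp add: binomial_right_mono card_mono[of "{..<n}", simplified])
    finally show ?thesis using binomial_le_power[of n t] by linarith
  qed
  then have conc_card: "real (card ?conc) \<le> real n ^ t" by (simp flip: of_nat_power)
  have "real (Ktt_count t M Rs {..<n}) = sum f ?spread + sum f ?conc"
    using Ktt_count_eq_sum_common_nbhd[OF fin(1)] split[of f] by (simp add: f_def)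
  moreover have "sum f ?spread \<le> real (Ktt_count t M Rs {..<n}) / 2 + real (g0 choose t) * real n ^ t"
    using sum_spread_subsets_le[OF A not_contains Rs g0] by (simp add: f_def)
  ultimately have "c * (real (Ktt_count t M Rs {..<n}) / 2 - real (g0 choose t) * real n ^ t) \<le> c * sum f ?conc"
    by (intro mult_left_mono c) linarith
  also have "\<dots> - real s * real n ^ t \<le> (\<Sum>R\<in>?conc. c * f R - real s)"
    using mult_right_mono[OF conc_card, of "real s"] by (simp add: sum_subtractf sum_distrib_left mult.commute)
  also have "\<dots> \<le> sum e ?conc"
    using sum_block_choose_ge[OF assms(4,5,3)] by (intro sum_mono) (auto simp: c_def f_def e_def)
  also have "\<dots> \<le> sum e ?\<P>"
    using split[of e] by (simp add: e_def sum_nonneg)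
  also have "\<dots> = (\<Sum>q<k. real (Ktt_count t M Rs (block_idx n k q)))"
    using sum_Ktt_count_blocks[OF fin(1) assms(5), of t M] by (simp add: e_def flip: of_nat_sum)
  finally show ?thesis by (simp add: c_def)
qed

definition block_concentration :: "nat \<Rightarrow> nat \<Rightarrow> nat \<Rightarrow> nat \<Rightarrow> (nat \<Rightarrow> nat \<Rightarrow> bool) \<Rightarrow> real \<Rightarrow> real \<Rightarrow> bool" where
  "block_concentration t r s k A c C \<longleftrightarrow>
     (\<forall>n M Rs. k dvd n \<longrightarrow> Rs \<subseteq> {..<n} \<longrightarrow> \<not> contains n n M r s A \<longrightarrow>
        C * real n ^ t < real (Ktt_count t M Rs {..<n}) \<longrightarrow>
        (\<exists>q<k. c * real (Ktt_count t M Rs {..<n}) / real k \<le> real (Ktt_count t M Rs (block_idx n k q))))"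

lemma block_concentration_exists:
  assumes A: "row_partite t r s A" and "1 \<le> t" "0 < r" "0 < s" "0 < k"
  shows "\<exists>C. block_concentration t r s k A (fact t / (4 * real s ^ (t - 1) * real t ^ t)) C"
proof -
  obtain g0 where g0: "blowup_threshold t r (1 / 2 ^ (k + 1)) g0"
    using ordered_blowup_in_dense_family[OF \<open>0 < r\<close>, of "1 / 2 ^ (k + 1)" t]
    unfolding blowup_threshold_def by auto
  define c where "c = fact t / (real t ^ t * real s ^ (t - 1))"
  define K where "K = real (g0 choose t)"
  have c: "0 < c" using assms(2,4) by (simp add: c_def)
  have "block_concentration t r s k A (c / 4) (4 * K + 4 * real s / c)"
    unfolding block_concentration_def
  proof (intro allI impI)
    fix n M Rs
    assume n: "k dvd n" and Rs: "Rs \<subseteq> {..<n}" and not_contains: "\<not> contains n n M r s A"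
      and many: "(4 * K + 4 * real s / c) * real n ^ t < real (Ktt_count t M Rs {..<n})"
    define N where "N = real (Ktt_count t M Rs {..<n})"
    have "c * ((4 * K + 4 * real s / c) * real n ^ t) = c * (4 * K * real n ^ t) + 4 * real s * real n ^ t"
      using c by (simp add: field_simps)
    then have "c * (4 * K * real n ^ t) + 4 * real s * real n ^ t < c * N"
      using mult_strict_left_mono[OF many c] by (simp add: N_def)
    then have "c * N / 4 \<le> c * (N / 2 - K * real n ^ t) - real s * real n ^ t"
      by (simp add: algebra_simps)
    also have "\<dots> \<le> (\<Sum>q<k. real (Ktt_count t M Rs (block_idx n k q)))"
      using sum_Ktt_count_blocks_ge[OF A \<open>0 < r\<close> \<open>1 \<le> t\<close> \<open>0 < k\<close> n not_contains Rs g0]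
      by (simp add: c_def K_def N_def)
    finally have "c / 4 * N / real k * real (card {..<k}) \<le> (\<Sum>q<k. real (Ktt_count t M Rs (block_idx n k q)))"
      using \<open>0 < k\<close> by simp
    moreover have "{..<k} \<noteq> {}" using \<open>0 < k\<close> by auto
    ultimately show "\<exists>q<k. c / 4 * N / real k \<le> real (Ktt_count t M Rs (block_idx n k q))"
      using obtain_ge_average[OF finite_lessThan] by blast
  qed
  moreover have "c / 4 = fact t / (4 * real s ^ (t - 1) * real t ^ t)" by (simp add: c_def)
  ultimately show ?thesis by auto
qed

lemma block_pair_concentration:
  assumes rows: "block_concentration t r s k A c1 C1"
    and cols: "block_concentration t s r k (\<lambda>i j. A j i) c2 C2" and "0 < c1" "0 \<le> c2" "0 < k"
  shows "\<exists>C. \<forall>n M. k dvd n \<longrightarrow> \<not> contains n n M r s A \<longrightarrow> C * real n ^ t < real (Ktt_count t M {..<n} {..<n}) \<longrightarrow>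
           (\<exists>p<k. \<exists>q<k. c2 * c1 * (real (Ktt_count t M {..<n} {..<n}) / real k ^ 2)
                          \<le> real (Ktt_count t M (block_idx n k p) (block_idx n k q)))"
proof (intro exI[of _ "max C1 (C2 * real k / c1)"] allI impI)
  fix n M
  assume n: "k dvd n" and not_contains: "\<not> contains n n M r s A"
    and many: "max C1 (C2 * real k / c1) * real n ^ t < real (Ktt_count t M {..<n} {..<n})"
  define N where "N = real (Ktt_count t M {..<n} {..<n})"
  have pos: "0 \<le> real n ^ t" by simp
  have "C1 * real n ^ t < N"
    using many mult_right_mono[OF max.cobounded1[of C1 "C2 * real k / c1"] pos] unfolding N_def by linarith
  then obtain q where q: "q < k" "c1 * N / real k \<le> real (Ktt_count t M {..<n} (block_idx n k q))"
    using rows[unfolded block_concentration_def, rule_format, OF n subset_refl not_contains]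
    unfolding N_def by blast
  have "C2 * real n ^ t = c1 * (C2 * real k / c1 * real n ^ t) / real k" using assms(3,5) by simp
  also have "\<dots> \<le> c1 * (max C1 (C2 * real k / c1) * real n ^ t) / real k"
    using assms(3,5) mult_right_mono[OF max.cobounded2[of "C2 * real k / c1" C1] pos]
    by (intro divide_right_mono mult_left_mono) auto
  also have "\<dots> < c1 * N / real k" using many assms(3,5) by (simp add: N_def divide_strict_right_mono)
  finally have "C2 * real n ^ t < real (Ktt_count t (\<lambda>i j. M j i) (block_idx n k q) {..<n})"
    using q(2) Ktt_count_transpose[of t M] by simp
  moreover have "\<not> contains n n (\<lambda>i j. M j i) s r (\<lambda>i j. A j i)"
    using not_contains contains_transpose by blast
  ultimately obtain p where "p < k" "c2 * real (Ktt_count t (\<lambda>i j. M j i) (block_idx n k q) {..<n}) / real k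
      \<le> real (Ktt_count t (\<lambda>i j. M j i) (block_idx n k q) (block_idx n k p))"
    using cols[unfolded block_concentration_def, rule_format, OF n block_idx_subset[OF q(1) n]] by blast
  then have p: "p < k"
    "c2 * real (Ktt_count t M {..<n} (block_idx n k q)) / real k \<le> real (Ktt_count t M (block_idx n k p) (block_idx n k q))"
    using Ktt_count_transpose[of t M] by simp_all
  have "c2 * c1 * (N / real k ^ 2) = c2 * (c1 * N / real k) / real k" by (simp add: power2_eq_square)
  also have "\<dots> \<le> c2 * real (Ktt_count t M {..<n} (block_idx n k q)) / real k"
    using q(2) assms(3-5) by (intro divide_right_mono mult_left_mono) auto
  finally show "\<exists>p<k. \<exists>q<k. c2 * c1 * (N / real k ^ 2) \<le> real (Ktt_count t M (block_idx n k p) (block_idx n k q))"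
    using p q(1) by (meson order.trans)
qed

theorem lemma3p2:
  fixes t r s k :: nat and A :: "nat \<Rightarrow> nat \<Rightarrow> bool"
  assumes "t \<ge> 2" and "r > 0" and "s > 0" and "k > 0"
    and "tt_partite t r s A"
  shows "\<exists>C::real. \<forall>n::nat. \<forall>M :: nat \<Rightarrow> nat \<Rightarrow> bool.
           n > 0 \<longrightarrow> k dvd n \<longrightarrow> \<not> contains n n M r s A \<longrightarrow>
           real (Ktt_count t M {..<n} {..<n}) > C * real n ^ t \<longrightarrow>
           (\<exists>p<k. \<exists>q<k. real (Ktt_count t M (block_idx n k p) (block_idx n k q)) \<ge>
              (real (fact t))^2 / (16 * (real (r * s)) ^ (t - 1) * (real t) ^ (2 * t))
              * (real (Ktt_count t M {..<n} {..<n}) / (real k)^2))"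
proof -
  have t: "1 \<le> t" using assms(1) by simp
  have A: "row_partite t r s A" "row_partite t s r (\<lambda>i j. A j i)"
    using assms(5) row_partite_transpose by (auto simp: tt_partite_def)
  define c1 where "c1 = fact t / (4 * real s ^ (t - 1) * real t ^ t)"
  define c2 where "c2 = fact t / (4 * real r ^ (t - 1) * real t ^ t)"
  obtain C1 C2 where C: "block_concentration t r s k A c1 C1" "block_concentration t s r k (\<lambda>i j. A j i) c2 C2"
    using block_concentration_exists[OF A(1) t assms(2-4)] block_concentration_exists[OF A(2) t assms(3,2,4)]
    unfolding c1_def c2_def by blast
  have c12: "0 < c1" "0 \<le> c2" using assms(3) t by (simp_all add: c1_def c2_def)
  have "real (r * s) ^ (t - 1) = real r ^ (t - 1) * real s ^ (t - 1)" "real t ^ (2 * t) = real t ^ t * real t ^ t"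
    by (simp_all add: power_mult_distrib mult_2 power_add)
  then have c: "c2 * c1 = (real (fact t))^2 / (16 * (real (r * s)) ^ (t - 1) * (real t) ^ (2 * t))"
    by (simp add: c1_def c2_def power2_eq_square)
  show ?thesis
    using block_pair_concentration[OF C c12 assms(4)] unfolding c by blast
qed

end
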